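(* Let $G$ be an infinite group and let $k$ be a field. Then for every integer $n\ge1$ the following are equivalent: (i) every stably injective $\tau\in\mathrm{LNUCA}_c(G,k^n)$ is surjective; (ii) the ring $\mathrm{LNUCA}_c(G,k^n)$ is directly finite; (iii) the ring $M_n(D^1(k[G]))$ is directly finite.
   Context: For $V=k^n$, $g\in G$, $x\in V^G$: $(gx)(h)=x(g^{-1}h)$. For finite $M\subset G$, $S=\mathcal{L}(V^M,V)$, $s\in S^G$: $\sigma_s(x)(g)=s(g)((g^{-1}x)\vert_M)$. $\mathrm{LNUCA}_c(G,V)$ is the set of $\sigma_s$ with $M$ finite and $s$ constant outside a finite subset of $G$; it is a ring with pointwise addition and composition. $\Sigma(s)$ is the closure of $\{gs:g\in G\}$ in $S^G$ (prodiscrete topology); $\sigma_s$ is stably injective if $\sigma_p$ is injective for all $p\in\Sigma(s)$. A ring is directly finite if $ab=1$ implies $ba=1$. $D^1(k[G])=k[G]\times(k[G])[G]$ ($(k[G])[G]$ = finitely supported maps $G\to k[G]$) with componentwise addition and multiplication $(\alpha_1,\beta_1)*(\alpha_2,\beta_2)=(\alpha_1\alpha_2,\alpha_1\beta_2+\beta_1\alpha_2+\beta_1\beta_2)$, where $\alpha_1\alpha_2$ is the group ring product and $(\alpha\beta)(g)(h)=\sum_t\alpha(t)\beta(gt)(t^{-1}h)$, $(\beta\alpha)(g)(h)=\sum_t\beta(g)(t)\alpha(t^{-1}h)$, $(\beta\gamma)(g)(h)=\sum_t\beta(g)(t)\gamma(gt)(t^{-1}h)$. *)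

theory Defs
  imports Main "HOL-Library.Groups_Big_Fun"
begin

text \<open>The group G is a type 'g of class group_add (group operation
written +, identity 0, inverse uminus; no commutativity assumed). V = k^n is the type 'n => 'k for a finite index type 'n
(n = CARD('n) >= 1). Configurations x in V^G have type 'g => 'n => 'k.
A linear map V^M -> V (M finite subset of G) is represented by a k-linear map
phi : V^G -> V that depends only on the restriction to M.\<close>

definition cfg_linear :: "(('g \<Rightarrow> 'n \<Rightarrow> 'k::field) \<Rightarrow> ('n \<Rightarrow> 'k)) \<Rightarrow> bool" where
  "cfg_linear \<phi> \<longleftrightarrow>
     (\<forall>y z. \<phi> (\<lambda>h i. y h i + z h i) = (\<lambda>i. \<phi> y i + \<phi> z i)) \<and>
     (\<forall>c y. \<phi> (\<lambda>h i. c * y h i) = (\<lambda>i. c * \<phi> y i))"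

definition local_on :: "'g set \<Rightarrow> (('g \<Rightarrow> 'v) \<Rightarrow> 'w) \<Rightarrow> bool" where
  "local_on M \<phi> \<longleftrightarrow> (\<forall>y z. (\<forall>m\<in>M. y m = z m) \<longrightarrow> \<phi> y = \<phi> z)"

definition lin_S :: "'g set \<Rightarrow> ((('g \<Rightarrow> 'n \<Rightarrow> 'k::field) \<Rightarrow> ('n \<Rightarrow> 'k))) set" where
  "lin_S M = {\<phi>. cfg_linear \<phi> \<and> local_on M \<phi>}"

text \<open>sigma_s(x)(g) = s(g)((g^-1 x)|_M), where (g^-1 x)(h) = x(g h).\<close>
definition sigma :: "('g::group_add \<Rightarrow> ('g \<Rightarrow> 'v) \<Rightarrow> 'v) \<Rightarrow> ('g \<Rightarrow> 'v) \<Rightarrow> ('g \<Rightarrow> 'v)" where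
  "sigma s x = (\<lambda>g. s g (\<lambda>h. x (g + h)))"

definition lnuca_rule :: "('g::group_add \<Rightarrow> ('g \<Rightarrow> 'n \<Rightarrow> 'k::field) \<Rightarrow> ('n \<Rightarrow> 'k)) \<Rightarrow> bool" where
  "lnuca_rule s \<longleftrightarrow> (\<exists>M. finite M \<and> (\<forall>g. s g \<in> lin_S M) \<and>
        (\<exists>F c. finite F \<and> (\<forall>g. g \<notin> F \<longrightarrow> s g = c)))"

definition LNUCA_c :: "(('g::group_add \<Rightarrow> 'n \<Rightarrow> 'k::field) \<Rightarrow> ('g \<Rightarrow> 'n \<Rightarrow> 'k)) set" where
  "LNUCA_c = {sigma s | s. lnuca_rule s}"

text \<open>Sigma(s): closure of the orbit {g s} in S^G, (g s)(h) = s(g^-1 h), for the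
prodiscrete topology: p is in the closure iff every finite window of p agrees
with some translate of s.\<close>
definition orbit_closure :: "('g::group_add \<Rightarrow> 'a) \<Rightarrow> ('g \<Rightarrow> 'a) set" where
  "orbit_closure s = {p. \<forall>E. finite E \<longrightarrow> (\<exists>g. \<forall>h\<in>E. p h = s (- g + h))}"

definition stably_injective :: "(('g::group_add \<Rightarrow> 'n \<Rightarrow> 'k::field) \<Rightarrow> ('g \<Rightarrow> 'n \<Rightarrow> 'k)) \<Rightarrow> bool" where
  "stably_injective \<tau> \<longleftrightarrow>
     (\<exists>s. lnuca_rule s \<and> \<tau> = sigma s \<and> (\<forall>p\<in>orbit_closure s. inj (sigma p)))"

definition LNUCA_directly_finite :: "'g::group_add itself \<Rightarrow> 'n itself \<Rightarrow> 'k::field itself \<Rightarrow> bool" where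
  "LNUCA_directly_finite _ _ _ \<longleftrightarrow>
     (\<forall>a \<in> (LNUCA_c :: (('g \<Rightarrow> 'n \<Rightarrow> 'k) \<Rightarrow> _) set). \<forall>b \<in> LNUCA_c. a \<circ> b = id \<longrightarrow> b \<circ> a = id)"

definition fin_supp :: "('a \<Rightarrow> 'b::zero) \<Rightarrow> bool" where
  "fin_supp f \<longleftrightarrow> finite {x. f x \<noteq> 0}"

definition gr_mult :: "('g::group_add \<Rightarrow> 'k::field) \<Rightarrow> ('g \<Rightarrow> 'k) \<Rightarrow> ('g \<Rightarrow> 'k)" where
  "gr_mult a b = (\<lambda>h. Sum_any (\<lambda>t. a t * b (- t + h)))"

type_synonym ('g, 'k) D1 = "('g \<Rightarrow> 'k) \<times> ('g \<Rightarrow> 'g \<Rightarrow> 'k)"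

definition D1_carrier :: "('g, 'k::field) D1 set" where
  "D1_carrier = {(a, b). fin_supp a \<and> finite {g. b g \<noteq> (\<lambda>_. 0)} \<and> (\<forall>g. fin_supp (b g))}"

definition D1_add :: "('g, 'k::field) D1 \<Rightarrow> ('g, 'k) D1 \<Rightarrow> ('g, 'k) D1" where
  "D1_add x y = ((\<lambda>h. fst x h + fst y h), (\<lambda>g h. snd x g h + snd y g h))"

definition D1_mult :: "('g::group_add, 'k::field) D1 \<Rightarrow> ('g, 'k) D1 \<Rightarrow> ('g, 'k) D1" where
  "D1_mult x y = (case x of (a1, b1) \<Rightarrow> case y of (a2, b2) \<Rightarrow>
     (gr_mult a1 a2,
      \<lambda>g h. Sum_any (\<lambda>t. a1 t * b2 (g + t) (- t + h))
          + Sum_any (\<lambda>t. b1 g t * a2 (- t + h))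
          + Sum_any (\<lambda>t. b1 g t * b2 (g + t) (- t + h))))"

definition D1_zero :: "('g, 'k::field) D1" where
  "D1_zero = ((\<lambda>_. 0), (\<lambda>_ _. 0))"

definition D1_one :: "('g::group_add, 'k::field) D1" where
  "D1_one = ((\<lambda>h. if h = 0 then 1 else 0), (\<lambda>_ _. 0))"

definition D1_mat_mult ::
  "('n::finite \<Rightarrow> 'n \<Rightarrow> ('g::group_add, 'k::field) D1) \<Rightarrow> ('n \<Rightarrow> 'n \<Rightarrow> ('g, 'k) D1) \<Rightarrow> ('n \<Rightarrow> 'n \<Rightarrow> ('g, 'k) D1)" where
  "D1_mat_mult A B = (\<lambda>i j.
     ((\<lambda>h. \<Sum>l\<in>UNIV. fst (D1_mult (A i l) (B l j)) h),
      (\<lambda>g h. \<Sum>l\<in>UNIV. snd (D1_mult (A i l) (B l j)) g h)))"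

definition D1_mat_one :: "'n \<Rightarrow> 'n \<Rightarrow> ('g::group_add, 'k::field) D1" where
  "D1_mat_one = (\<lambda>i j. if i = j then D1_one else D1_zero)"

definition D1_mat_directly_finite :: "'g::group_add itself \<Rightarrow> 'n::finite itself \<Rightarrow> 'k::field itself \<Rightarrow> bool" where
  "D1_mat_directly_finite _ _ _ \<longleftrightarrow>
     (\<forall>A B :: 'n \<Rightarrow> 'n \<Rightarrow> ('g, 'k) D1.
        (\<forall>i j. A i j \<in> D1_carrier) \<longrightarrow> (\<forall>i j. B i j \<in> D1_carrier) \<longrightarrow>
        D1_mat_mult A B = D1_mat_one \<longrightarrow> D1_mat_mult B A = D1_mat_one)"

end

theory Submission
  imports Defs "HOL-Library.Function_Algebras" "HOL.Vector_Spaces"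
begin

(* If a b = 1 in LNUCA_c, then b is stably injective: near any cell a rule in
   Sigma(b) is a translate of b, and the matching translate of a inverts it there. So (i) makes b
   surjective, whence b a = 1. Conversely let tau = sigma_s be stably injective. As G is infinite,
   the constant value c of s lies in Sigma(s), so sigma_c and sigma_s are injective. For an
   injective sigma_p each coordinate x(h)_i is a finite linear combination of values of sigma_p x:
   otherwise a linear functional separating the unit configuration at (h, i) from the span of the
   (finitely supported) coefficient vectors of the maps x |-> sigma_p x (g)_j would produce a
   nonzero configuration killed by sigma_p. A local left inverse of sigma_c, patched at the
   finitely many cells that see a defect of s by local left inverses of sigma_s, is a left inverse
   of tau in LNUCA_c; with (ii) it is also a right inverse.

   A matrix entry (alpha, beta) acts at the cell g through the group-ring element
   alpha + beta(g). This is a multiplicative map from M_n(D^1(k[G])) onto LNUCA_c sending 1 to id,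
   and it reflects A B = 1: at a cell far from all defects beta vanishes, so alpha and then beta can
   be read off the image. *)

section \<open>Linear functionals on configurations\<close>

lemma (in vector_space) linear_functional_separating_from_span:
  assumes "v \<notin> span S"
  obtains f where "Vector_Spaces.linear (*s) (*) f" "f v = 1" "\<And>s. s \<in> S \<Longrightarrow> f s = 0"
proof -
  interpret vector_space_pair scale "(*) :: 'a \<Rightarrow> 'a \<Rightarrow> 'a"
    by unfold_locales (auto simp: algebra_simps)
  obtain B where B: "B \<subseteq> S" "independent B" "S \<subseteq> span B"
    by (rule basis_exists)
  have "v \<notin> span B"
    using assms span_mono[OF B(1)] by blast
  then have "independent (insert v B)"
    using B(2) by (rule independent_insertI)
  from linear_independent_extend[OF this, of "\<lambda>b. if b = v then 1 else 0"]
  obtain f where f: "Vector_Spaces.linear (*s) (*) f"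
    and f_on: "\<And>b. b \<in> insert v B \<Longrightarrow> f b = (if b = v then 1 else 0)"
    by blast
  have "f s = 0" if "s \<in> S" for s
  proof (rule linear_eq_0_on_span[OF f])
    show "s \<in> span B" using B(3) that by blast
    show "f b = 0" if "b \<in> B" for b
      using f_on[of b] that \<open>v \<notin> span B\<close> span_base[of b B] by auto
  qed
  then show ?thesis using that f f_on[of v] by simp
qed

lemma local_onD: "local_on M \<phi> \<Longrightarrow> (\<And>m. m \<in> M \<Longrightarrow> y m = z m) \<Longrightarrow> \<phi> y = \<phi> z"
  unfolding local_on_def by blast

lemma sum_fun_apply: "sum f A x = (\<Sum>a\<in>A. f a x)"
  by (induction A rule: infinite_finite_induct) auto

definition cfg_scale :: "'k::field \<Rightarrow> ('a \<Rightarrow> 'b \<Rightarrow> 'k) \<Rightarrow> 'a \<Rightarrow> 'b \<Rightarrow> 'k" where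
  "cfg_scale c x = (\<lambda>h i. c * x h i)"

interpretation cfg: vector_space_pair cfg_scale "(*) :: 'k::field \<Rightarrow> 'k \<Rightarrow> 'k"
  by unfold_locales (auto simp: cfg_scale_def fun_eq_iff algebra_simps)

abbreviation linear_functional :: "(('a \<Rightarrow> 'b \<Rightarrow> 'k::field) \<Rightarrow> 'k) \<Rightarrow> bool" where
  "linear_functional \<equiv> Vector_Spaces.linear cfg_scale (*)"

definition unit_cfg :: "'a \<Rightarrow> 'b \<Rightarrow> 'a \<Rightarrow> 'b \<Rightarrow> 'k::field" where
  "unit_cfg t j = (\<lambda>h i. if h = t \<and> i = j then 1 else 0)"

definition functional_coeffs :: "(('a \<Rightarrow> 'b \<Rightarrow> 'k::field) \<Rightarrow> 'k) \<Rightarrow> 'a \<Rightarrow> 'b \<Rightarrow> 'k" where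
  "functional_coeffs f = (\<lambda>t j. f (unit_cfg t j))"

definition cfg_pairing :: "'a set \<Rightarrow> ('a \<Rightarrow> 'b::finite \<Rightarrow> 'k::field) \<Rightarrow> ('a \<Rightarrow> 'b \<Rightarrow> 'k) \<Rightarrow> 'k" where
  "cfg_pairing D x v = (\<Sum>(t, j)\<in>D \<times> UNIV. x t j * v t j)"

lemma cfg_pairing_commute: "cfg_pairing D x v = cfg_pairing D v x"
  by (simp add: cfg_pairing_def mult.commute)

lemma linear_functional_cfg_pairing: "linear_functional (cfg_pairing D x)"
proof -
  have "cfg_pairing D x (y + z) = cfg_pairing D x y + cfg_pairing D x z" for y z
    by (simp add: cfg_pairing_def case_prod_beta distrib_left sum.distrib)
  moreover have "cfg_pairing D x (cfg_scale c y) = c * cfg_pairing D x y" for c y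
  proof -
    have "cfg_pairing D x (cfg_scale c y) = (\<Sum>(t, j)\<in>D \<times> UNIV. c * (x t j * y t j))"
      unfolding cfg_pairing_def cfg_scale_def by (simp only: mult.left_commute)
    then show ?thesis
      by (simp add: cfg_pairing_def sum_distrib_left case_prod_beta)
  qed
  ultimately show ?thesis
    by (simp add: Vector_Spaces.linear_iff cfg.vs1.vector_space_axioms cfg.vs2.vector_space_axioms)
qed

lemma cfg_pairing_unit:
  assumes "finite D" "t \<in> D"
  shows "cfg_pairing D x (unit_cfg t j) = x t j"
proof -
  have "cfg_pairing D x (unit_cfg t j) = (\<Sum>p\<in>D \<times> UNIV. if p = (t, j) then x t j else 0)"
    unfolding cfg_pairing_def by (rule sum.cong) (auto simp: unit_cfg_def split: prod.split)
  then show ?thesis using assms by simp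
qed

lemma cfg_expansion:
  fixes v :: "'a \<Rightarrow> 'b::finite \<Rightarrow> 'k::field"
  assumes "finite D" "\<And>t j. t \<notin> D \<Longrightarrow> v t j = 0"
  shows "(\<Sum>(t, j)\<in>D \<times> UNIV. cfg_scale (v t j) (unit_cfg t j)) = v"
proof (intro ext)
  fix h i
  have "(\<Sum>(t, j)\<in>D \<times> UNIV. cfg_scale (v t j) (unit_cfg t j)) h i
      = (\<Sum>p\<in>D \<times> UNIV. if p = (h, i) then v h i else 0)"
    by (simp add: sum_fun_apply case_prod_beta cfg_scale_def unit_cfg_def) (rule sum.cong, auto)
  then show "(\<Sum>(t, j)\<in>D \<times> UNIV. cfg_scale (v t j) (unit_cfg t j)) h i = v h i"
    using assms by auto
qed

lemma linear_functional_eq_pairing: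
  assumes f: "linear_functional f" and "finite D" "\<And>t j. t \<notin> D \<Longrightarrow> v t j = 0"
  shows "f v = cfg_pairing D v (functional_coeffs f)"
proof -
  have "(\<Sum>(t, j)\<in>D \<times> UNIV. cfg_scale (v t j) (unit_cfg t j)) = v"
    by (rule cfg_expansion) (use assms in auto)
  then have "f v = f (\<Sum>(t, j)\<in>D \<times> UNIV. cfg_scale (v t j) (unit_cfg t j))"
    by simp
  also have "\<dots> = cfg_pairing D v (functional_coeffs f)"
    by (simp add: cfg.linear_sum[OF f] cfg.linear_scale[OF f] case_prod_beta
        cfg_pairing_def functional_coeffs_def)
  finally show ?thesis .
qed

lemma local_functional_eq_pairing:
  assumes f: "linear_functional f" and "local_on D f" "D \<subseteq> D'" "finite D'"
  shows "f x = cfg_pairing D' x (functional_coeffs f)"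
proof -
  define x' where "x' = (\<lambda>t. if t \<in> D' then x t else (\<lambda>_. 0))"
  have "f x = f x'"
    by (rule local_onD[OF assms(2)]) (use assms(3) in \<open>auto simp: x'_def\<close>)
  also have "\<dots> = cfg_pairing D' x' (functional_coeffs f)"
    by (rule linear_functional_eq_pairing[OF f assms(4)]) (simp add: x'_def)
  also have "\<dots> = cfg_pairing D' x (functional_coeffs f)"
    unfolding cfg_pairing_def x'_def by (rule sum.cong) auto
  finally show ?thesis .
qed

lemma functional_coeffs_outside:
  assumes "linear_functional f" "local_on D f" "t \<notin> D"
  shows "functional_coeffs f t j = 0"
proof -
  have "f (unit_cfg t j) = f 0"
    by (rule local_onD[OF assms(2)]) (use assms(3) in \<open>auto simp: unit_cfg_def\<close>)
  then show ?thesis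
    by (simp add: functional_coeffs_def cfg.linear_0[OF assms(1)])
qed

lemma functional_coeffs_duality:
  fixes L f :: "('a \<Rightarrow> 'b::finite \<Rightarrow> 'k::field) \<Rightarrow> 'k"
  assumes L: "linear_functional L" "local_on D L" "finite D" and f: "linear_functional f"
  shows "L (functional_coeffs f) = f (functional_coeffs L)"
proof -
  have "L (functional_coeffs f) = cfg_pairing D (functional_coeffs f) (functional_coeffs L)"
    by (rule local_functional_eq_pairing[OF L(1,2) order_refl L(3)])
  also have "\<dots> = f (functional_coeffs L)"
    using linear_functional_eq_pairing[OF f L(3) functional_coeffs_outside[OF L(1,2)]]
    by (simp add: cfg_pairing_commute)
  finally show ?thesis .
qed

lemma unit_cfg_in_span_of_separating_functionals:
  fixes L :: "'i \<Rightarrow> ('a \<Rightarrow> 'b::finite \<Rightarrow> 'k::field) \<Rightarrow> 'k"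
  assumes lin: "\<And>a. linear_functional (L a)" and loc: "\<And>a. local_on (D a) (L a)"
    and fin: "\<And>a. finite (D a)" and sep: "\<And>x. (\<And>a. L a x = 0) \<Longrightarrow> x = 0"
  shows "unit_cfg t j \<in> cfg.vs1.span (range (\<lambda>a. functional_coeffs (L a)))"
proof (rule ccontr)
  assume "unit_cfg t j \<notin> cfg.vs1.span (range (\<lambda>a. functional_coeffs (L a)))"
  then obtain f where f: "linear_functional f" "f (unit_cfg t j) = 1"
    and f0: "\<And>v. v \<in> range (\<lambda>a. functional_coeffs (L a)) \<Longrightarrow> f v = 0"
    using cfg.vs1.linear_functional_separating_from_span by blast
  have "functional_coeffs f = 0"
    by (rule sep) (simp add: functional_coeffs_duality[OF lin loc fin f(1)] f0)
  then show False
    using f(2) by (simp add: functional_coeffs_def fun_eq_iff)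
qed

lemma coordinate_finite_combination:
  fixes L :: "'i \<Rightarrow> ('a \<Rightarrow> 'b::finite \<Rightarrow> 'k::field) \<Rightarrow> 'k"
  assumes lin: "\<And>a. linear_functional (L a)" and loc: "\<And>a. local_on (D a) (L a)"
    and fin: "\<And>a. finite (D a)" and sep: "\<And>x. (\<And>a. L a x = 0) \<Longrightarrow> x = 0"
  shows "\<exists>A c. finite A \<and> (\<forall>x. x t0 j0 = (\<Sum>a\<in>A. c a * L a x))"
proof -
  define \<kappa> where "\<kappa> = (\<lambda>a. functional_coeffs (L a))"
  have "unit_cfg t0 j0 \<in> cfg.vs1.span (range \<kappa>)"
    unfolding \<kappa>_def by (rule unit_cfg_in_span_of_separating_functionals[OF lin loc fin sep])
  then obtain T r where T: "finite T" "T \<subseteq> range \<kappa>" "unit_cfg t0 j0 = (\<Sum>v\<in>T. cfg_scale (r v) v)"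
    unfolding cfg.vs1.span_explicit by blast
  then obtain A where A: "inj_on \<kappa> A" "T = \<kappa> ` A"
    using subset_image_inj by metis
  then have finA: "finite A"
    using T(1) finite_image_iff by blast
  have unit_sum: "unit_cfg t0 j0 = (\<Sum>a\<in>A. cfg_scale (r (\<kappa> a)) (\<kappa> a))"
    using T(3) A by (simp add: sum.reindex)
  have coord: "x t0 j0 = (\<Sum>a\<in>A. r (\<kappa> a) * L a x)" for x
  proof -
    define D' where "D' = insert t0 (\<Union>a\<in>A. D a)"
    have finD': "finite D'"
      using finA fin by (simp add: D'_def)
    have "x t0 j0 = cfg_pairing D' x (unit_cfg t0 j0)"
      using finD' by (simp add: cfg_pairing_unit D'_def)
    also have "\<dots> = (\<Sum>a\<in>A. r (\<kappa> a) * cfg_pairing D' x (\<kappa> a))"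
      unfolding unit_sum
      by (simp add: cfg.linear_sum[OF linear_functional_cfg_pairing]
          cfg.linear_scale[OF linear_functional_cfg_pairing])
    also have "\<dots> = (\<Sum>a\<in>A. r (\<kappa> a) * L a x)"
    proof (rule sum.cong[OF refl])
      fix a assume "a \<in> A"
      then have "D a \<subseteq> D'" by (auto simp: D'_def)
      then show "r (\<kappa> a) * cfg_pairing D' x (\<kappa> a) = r (\<kappa> a) * L a x"
        unfolding \<kappa>_def using local_functional_eq_pairing[OF lin loc _ finD'] by simp
    qed
    finally show ?thesis .
  qed
  show ?thesis
    by (rule exI[of _ A], rule exI[of _ "\<lambda>a. r (\<kappa> a)"]) (simp add: finA coord)
qed

section \<open>Left inverses of stably injective automata\<close>

lemma lin_S_linear_functional: "\<phi> \<in> lin_S M \<Longrightarrow> linear_functional (\<lambda>x. \<phi> x i)"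
  by (auto simp: lin_S_def cfg_linear_def Vector_Spaces.linear_iff plus_fun_def cfg_scale_def
      cfg.vs1.vector_space_axioms cfg.vs2.vector_space_axioms)

lemma lin_S_local: "\<phi> \<in> lin_S M \<Longrightarrow> local_on M \<phi>"
  unfolding lin_S_def by blast

lemma lin_S_local_coordinate: "\<phi> \<in> lin_S M \<Longrightarrow> local_on M (\<lambda>x. \<phi> x i)"
  unfolding local_on_def using local_onD[OF lin_S_local] by metis

lemma lin_S_zero:
  assumes "\<phi> \<in> lin_S M"
  shows "\<phi> (\<lambda>_. 0) = 0"
proof -
  have "\<phi> 0 = 0"
    using cfg.linear_0[OF lin_S_linear_functional[OF assms]] by (simp add: fun_eq_iff)
  then show ?thesis by (simp add: zero_fun_def)
qed

lemma lin_S_mono: "M \<subseteq> M' \<Longrightarrow> lin_S M \<subseteq> lin_S M'"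
  unfolding lin_S_def local_on_def by blast

lemma lin_S_combination:
  "(\<lambda>y i. \<Sum>a\<in>A i. c i a * y (fst a) (snd a)) \<in> lin_S (\<Union>i. fst ` A i)"
  by (auto simp: lin_S_def cfg_linear_def local_on_def fun_eq_iff distrib_left sum.distrib
      sum_distrib_left mult.left_commute intro!: sum.cong)

lemma lin_S_translate:
  "\<phi> \<in> lin_S M \<Longrightarrow> (\<lambda>y. \<phi> (\<lambda>u. y (g + u))) \<in> lin_S ((+) g ` M)"
  by (auto simp: lin_S_def cfg_linear_def local_on_def)

lemma sigma_const_translate:
  "sigma (\<lambda>_. c) (\<lambda>u. x (h + u)) = (\<lambda>u. sigma (\<lambda>_. c) x (h + u))"
  by (simp add: sigma_def add.assoc)

lemma injective_rule_local_left_inverse: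
  fixes p :: "'g::group_add \<Rightarrow> ('g \<Rightarrow> 'n::finite \<Rightarrow> 'k::field) \<Rightarrow> 'n \<Rightarrow> 'k"
  assumes M: "finite M" "\<And>g. p g \<in> lin_S M" and inj: "inj (sigma p)"
  obtains N \<phi> where "finite N" "\<phi> \<in> lin_S N" "\<And>x. \<phi> (\<lambda>u. sigma p x (h + u)) = x h"
proof -
  have window: "(\<lambda>y. p g (\<lambda>u. y (g + u))) \<in> lin_S ((+) g ` M)" for g
    by (rule lin_S_translate[OF M(2)])
  have "\<exists>A c. finite A \<and> (\<forall>x. x h i = (\<Sum>a\<in>A. c a * sigma p x (fst a) (snd a)))" for i
  proof (rule coordinate_finite_combination)
    fix a :: "'g \<times> 'n"
    show "linear_functional (\<lambda>x. sigma p x (fst a) (snd a))"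
      using lin_S_linear_functional[OF window] by (simp add: sigma_def)
    show "local_on ((+) (fst a) ` M) (\<lambda>x. sigma p x (fst a) (snd a))"
      using lin_S_local_coordinate[OF window] by (simp add: sigma_def)
    show "finite ((+) (fst a) ` M)"
      using M(1) by simp
  next
    fix x :: "'g \<Rightarrow> 'n \<Rightarrow> 'k"
    assume zero: "\<And>a. sigma p x (fst a) (snd a) = 0"
    have "sigma p x g i = sigma p 0 g i" for g i
      using zero[of "(g, i)"] by (simp add: sigma_def lin_S_zero[OF M(2)])
    then have "sigma p x = sigma p 0"
      by (simp add: fun_eq_iff)
    then show "x = 0"
      using inj by (simp add: inj_eq)
  qed
  then obtain A c where A: "\<And>i. finite (A i)"
    and coord: "\<And>i x. x h i = (\<Sum>a\<in>A i. c i a * sigma p x (fst a) (snd a))"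
    by metis
  define \<psi> where "\<psi> y = (\<lambda>i. \<Sum>a\<in>A i. c i a * y (fst a) (snd a))" for y :: "'g \<Rightarrow> 'n \<Rightarrow> 'k"
  show ?thesis
  proof
    have "\<psi> \<in> lin_S (\<Union>i. fst ` A i)"
      unfolding \<psi>_def by (rule lin_S_combination)
    then show "(\<lambda>y. \<psi> (\<lambda>u. y (- h + u))) \<in> lin_S ((+) (- h) ` (\<Union>i. fst ` A i))"
      by (rule lin_S_translate)
    show "finite ((+) (- h) ` (\<Union>i. fst ` A i))"
      using A by simp
    show "\<psi> (\<lambda>u. sigma p x (h + (- h + u))) = x h" for x
      by (simp add: \<psi>_def coord fun_eq_iff add.assoc[symmetric])
  qed
qed

lemma const_rule_local_left_inverse:
  fixes c :: "('g::group_add \<Rightarrow> 'n::finite \<Rightarrow> 'k::field) \<Rightarrow> 'n \<Rightarrow> 'k"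
  assumes "finite M" "c \<in> lin_S M" "inj (sigma (\<lambda>_::'g. c))"
  obtains N \<phi> where "finite N" "\<phi> \<in> lin_S N" "\<And>x h. \<phi> (\<lambda>u. sigma (\<lambda>_. c) x (h + u)) = x h"
proof -
  obtain N \<phi> where \<phi>: "finite N" "\<phi> \<in> lin_S N" "\<And>x. \<phi> (\<lambda>u. sigma (\<lambda>_. c) x (0 + u)) = x 0"
    using injective_rule_local_left_inverse[OF assms(1) _ assms(3)] assms(2) by metis
  have "\<phi> (\<lambda>u. sigma (\<lambda>_. c) x (h + u)) = x h" for x h
    using \<phi>(3)[of "\<lambda>u. x (h + u)"] by (simp add: sigma_const_translate)
  with \<phi>(1,2) that show ?thesis by blast
qed

lemma finite_translates_meeting:
  assumes "finite E" "finite F"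
  shows "finite {g::'g::group_add. \<exists>e\<in>E. g + e \<in> F}"
proof (rule finite_subset)
  show "{g. \<exists>e\<in>E. g + e \<in> F} \<subseteq> (\<lambda>(f, e). f + - e) ` (F \<times> E)"
  proof
    fix g assume "g \<in> {g. \<exists>e\<in>E. g + e \<in> F}"
    then obtain e where "e \<in> E" "g + e \<in> F" by blast
    moreover have "g = (g + e) + - e" by (simp add: add.assoc)
    ultimately show "g \<in> (\<lambda>(f, e). f + - e) ` (F \<times> E)" by force
  qed
qed (use assms in simp)

lemma orbit_closure_self: "s \<in> orbit_closure s"
  unfolding orbit_closure_def by (auto intro: exI[of _ 0])

lemma orbit_closure_const:
  assumes inf: "infinite (UNIV :: 'g::group_add set)"
    and F: "finite F" "\<And>g. g \<notin> F \<Longrightarrow> s g = c"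
  shows "(\<lambda>_. c) \<in> orbit_closure (s :: 'g \<Rightarrow> 'a)"
  unfolding orbit_closure_def
proof (intro CollectI allI impI)
  fix E :: "'g set" assume "finite E"
  then obtain g where "g \<notin> {g. \<exists>e\<in>E. g + e \<in> F}"
    using ex_new_if_finite[OF inf finite_translates_meeting[OF _ F(1)]] by blast
  then show "\<exists>g. \<forall>h\<in>E. c = s (- g + h)"
    using F(2) by (intro exI[of _ "- g"]) auto
qed

lemma lnuca_ruleE:
  assumes "infinite (UNIV :: 'g::group_add set)" "lnuca_rule (s :: 'g \<Rightarrow> ('g \<Rightarrow> 'n \<Rightarrow> 'k::field) \<Rightarrow> _)"
  obtains M F c where "finite M" "\<And>g. s g \<in> lin_S M" "finite F" "\<And>g. g \<notin> F \<Longrightarrow> s g = c"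
    "c \<in> lin_S M"
proof -
  obtain M F c where M: "finite M" "\<And>g. s g \<in> lin_S M" and F: "finite F" "\<And>g. g \<notin> F \<Longrightarrow> s g = c"
    using assms(2) unfolding lnuca_rule_def by blast
  obtain g where "g \<notin> F"
    using ex_new_if_finite[OF assms(1) F(1)] by blast
  then show ?thesis
    using that M F M(2)[of g] by simp
qed

lemma lnuca_rule_patch:
  assumes "finite K" "finite N0" "\<phi>0 \<in> lin_S N0" "\<And>h. h \<in> K \<Longrightarrow> finite (N h) \<and> \<phi> h \<in> lin_S (N h)"
  shows "lnuca_rule (\<lambda>h. if h \<in> K then \<phi> h else \<phi>0)"
  unfolding lnuca_rule_def
proof (intro exI conjI allI impI)
  show "finite (N0 \<union> (\<Union>h\<in>K. N h))"
    using assms by simp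
  show "(if h \<in> K then \<phi> h else \<phi>0) \<in> lin_S (N0 \<union> (\<Union>h\<in>K. N h))" for h
  proof (cases "h \<in> K")
    case True
    then show ?thesis
      using assms(4)[OF True] lin_S_mono[of "N h" "N0 \<union> (\<Union>h\<in>K. N h)"] by auto
  next
    case False
    then show ?thesis
      using assms(3) lin_S_mono[of N0 "N0 \<union> (\<Union>h\<in>K. N h)"] by auto
  qed
  show "(if h \<in> K then \<phi> h else \<phi>0) = \<phi>0" if "h \<notin> K" for h
    using that by simp
qed (rule assms(1))

lemma patched_rule_left_inverse:
  assumes F: "\<And>g. g \<notin> F \<Longrightarrow> s g = c"
    and \<phi>0: "local_on N0 \<phi>0" "\<And>x h. \<phi>0 (\<lambda>u. sigma (\<lambda>_. c) x (h + u)) = x h"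
    and \<phi>: "\<And>h x. \<phi> h (\<lambda>u. sigma s x (h + u)) = x h"
  shows "sigma (\<lambda>h. if h \<in> {h. \<exists>m\<in>N0. h + m \<in> F} then \<phi> h else \<phi>0) (sigma s x) = x"
proof
  fix h
  show "sigma (\<lambda>h. if h \<in> {h. \<exists>m\<in>N0. h + m \<in> F} then \<phi> h else \<phi>0) (sigma s x) h = x h"
  proof (cases "\<exists>m\<in>N0. h + m \<in> F")
    case True
    then show ?thesis by (simp add: sigma_def[of "\<lambda>h. if _ h then _ h else _"] \<phi>)
  next
    case False
    \<comment> \<open>Away from the finitely many defects, \<open>\<phi>0\<close> only sees cells
      where \<open>s\<close> agrees with \<open>c\<close>.\<close>
    then have agree: "sigma s x (h + m) = sigma (\<lambda>_. c) x (h + m)" if "m \<in> N0" for m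
      using F that by (auto simp: sigma_def)
    have "\<phi>0 (\<lambda>u. sigma s x (h + u)) = \<phi>0 (\<lambda>u. sigma (\<lambda>_. c) x (h + u))"
      using \<phi>0(1) by (rule local_onD) (simp add: agree)
    then show ?thesis
      using False by (simp add: sigma_def[of "\<lambda>h. if _ h then _ h else _"] \<phi>0(2))
  qed
qed

lemma stably_injective_left_invertible:
  assumes inf: "infinite (UNIV :: 'g::group_add set)"
    and si: "stably_injective (\<tau> :: ('g \<Rightarrow> 'n::finite \<Rightarrow> 'k::field) \<Rightarrow> _)"
  obtains r where "lnuca_rule r" "\<And>x. sigma r (\<tau> x) = x"
proof -
  obtain s where s: "lnuca_rule s" "\<tau> = sigma s" "\<And>p. p \<in> orbit_closure s \<Longrightarrow> inj (sigma p)"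
    using si unfolding stably_injective_def by blast
  obtain M F c where M: "finite M" "\<And>g. s g \<in> lin_S M"
    and F: "finite F" "\<And>g. g \<notin> F \<Longrightarrow> s g = c" and c: "c \<in> lin_S M"
    using lnuca_ruleE[OF inf s(1)] by blast
  have "(\<lambda>_. c) \<in> orbit_closure s"
    using inf F by (rule orbit_closure_const)
  then have "inj (sigma (\<lambda>_::'g. c))"
    by (rule s(3))
  then obtain N0 \<phi>0 where \<phi>0: "finite N0" "\<phi>0 \<in> lin_S N0"
    and \<phi>0_at: "\<And>x h. \<phi>0 (\<lambda>u. sigma (\<lambda>_. c) x (h + u)) = x h"
    using const_rule_local_left_inverse[OF M(1) c] by blast
  have "\<forall>h. \<exists>N \<phi>. finite N \<and> \<phi> \<in> lin_S N \<and> (\<forall>x. \<phi> (\<lambda>u. sigma s x (h + u)) = x h)"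
    using injective_rule_local_left_inverse[OF M s(3)[OF orbit_closure_self]] by metis
  then obtain N \<phi> where \<phi>: "\<And>h. finite (N h)" "\<And>h. \<phi> h \<in> lin_S (N h)"
    "\<And>h x. \<phi> h (\<lambda>u. sigma s x (h + u)) = x h"
    by metis
  define K where "K = {h. \<exists>m\<in>N0. h + m \<in> F}"
  show ?thesis
  proof
    show "lnuca_rule (\<lambda>h. if h \<in> K then \<phi> h else \<phi>0)"
    proof (rule lnuca_rule_patch[OF _ \<phi>0(1,2)])
      show "finite K"
        unfolding K_def by (rule finite_translates_meeting[OF \<phi>0(1) F(1)])
      show "finite (N h) \<and> \<phi> h \<in> lin_S (N h)" if "h \<in> K" for h
        using \<phi> by blast
    qed
    show "sigma (\<lambda>h. if h \<in> K then \<phi> h else \<phi>0) (\<tau> x) = x" for x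
      unfolding K_def s(2)
      using F(2) lin_S_local[OF \<phi>0(2)] \<phi>0_at \<phi>(3) by (rule patched_rule_left_inverse)
  qed
qed

lemma stably_injective_if_left_invertible:
  assumes "lnuca_rule a" "lnuca_rule b" and inv: "\<And>y. sigma a (sigma b y) = y"
  shows "stably_injective (sigma b)"
proof -
  obtain M where M: "finite M" "\<And>g. a g \<in> lin_S M"
    using assms(1) unfolding lnuca_rule_def by blast
  have "inj (sigma p)" if p: "p \<in> orbit_closure b" for p
  proof -
    have "\<exists>g0. \<forall>x. x g = a (- g0 + g) (\<lambda>m. sigma p x (g + m))" for g
    proof -
      obtain g0 where g0: "\<forall>h\<in>(+) g ` M. p h = b (- g0 + h)"
        using p M(1) unfolding orbit_closure_def by blast
      have "x g = a (- g0 + g) (\<lambda>m. sigma p x (g + m))" for x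
      proof -
        define y where "y u = x (g0 + u)" for u
        have loc: "local_on M (a (- g0 + g))"
          using M(2) by (rule lin_S_local)
        have "a (- g0 + g) (\<lambda>m. sigma b y (- g0 + g + m)) = a (- g0 + g) (\<lambda>m. sigma p x (g + m))"
          by (rule local_onD[OF loc]) (use g0 in \<open>simp add: sigma_def y_def add.assoc\<close>)
        moreover have "a (- g0 + g) (\<lambda>m. sigma b y (- g0 + g + m)) = x g"
          using inv[of y] by (simp add: sigma_def[of a] fun_eq_iff y_def add.assoc[symmetric])
        ultimately show ?thesis by simp
      qed
      then show ?thesis by blast
    qed
    then show ?thesis
      by (metis injI ext)
  qed
  then show ?thesis
    unfolding stably_injective_def using assms(2) by blast
qed

lemma surj_if_stably_injective:
  assumes inf: "infinite (UNIV :: 'g::group_add set)"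
    and df: "LNUCA_directly_finite TYPE('g) TYPE('n::finite) TYPE('k::field)"
    and \<tau>: "\<tau> \<in> (LNUCA_c :: (('g \<Rightarrow> 'n \<Rightarrow> 'k) \<Rightarrow> _) set)" "stably_injective \<tau>"
  shows "surj \<tau>"
proof -
  obtain r where r: "lnuca_rule r" "\<And>x. sigma r (\<tau> x) = x"
    using stably_injective_left_invertible[OF inf \<tau>(2)] by blast
  have "sigma r \<in> LNUCA_c"
    using r(1) unfolding LNUCA_c_def by blast
  moreover have "sigma r \<circ> \<tau> = id"
    using r(2) by (simp add: fun_eq_iff)
  ultimately have "\<tau> \<circ> sigma r = id"
    using df \<tau>(1) unfolding LNUCA_directly_finite_def by blast
  then show ?thesis
    by (metis comp_apply id_apply surjI)
qed

lemma LNUCA_directly_finite_if_stably_injective_surj: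
  assumes "\<forall>\<tau> \<in> (LNUCA_c :: (('g::group_add \<Rightarrow> 'n::finite \<Rightarrow> 'k::field) \<Rightarrow> _) set).
    stably_injective \<tau> \<longrightarrow> surj \<tau>"
  shows "LNUCA_directly_finite TYPE('g) TYPE('n) TYPE('k)"
  unfolding LNUCA_directly_finite_def
proof (intro ballI impI)
  fix f g :: "('g \<Rightarrow> 'n \<Rightarrow> 'k) \<Rightarrow> _"
  assume "f \<in> LNUCA_c" "g \<in> LNUCA_c" and fg: "f \<circ> g = id"
  then obtain a b where ab: "lnuca_rule a" "f = sigma a" "lnuca_rule b" "g = sigma b"
    unfolding LNUCA_c_def by blast
  then have "sigma a (sigma b y) = y" for y
    using fg by (metis comp_apply id_apply)
  then have "stably_injective g"
    using stably_injective_if_left_invertible[of a b] ab by simp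
  then have "surj g"
    using assms \<open>g \<in> LNUCA_c\<close> by blast
  then show "g \<circ> f = id"
    using fg by (metis comp_apply id_apply surjD ext)
qed

section \<open>Matrices over \<open>D\<^sup>1(k[G])\<close>\<close>

type_synonym ('n, 'g, 'k) D1_mat = "'n \<Rightarrow> 'n \<Rightarrow> ('g, 'k) D1"

definition D1_mat_coeff :: "('n, 'g, 'k::field) D1_mat \<Rightarrow> 'g \<Rightarrow> 'n \<Rightarrow> 'n \<Rightarrow> 'g \<Rightarrow> 'k" where
  "D1_mat_coeff A g i j t = fst (A i j) t + snd (A i j) g t"

definition D1_mat_rule ::
  "('n::finite, 'g::group_add, 'k::field) D1_mat \<Rightarrow> 'g \<Rightarrow> ('g \<Rightarrow> 'n \<Rightarrow> 'k) \<Rightarrow> 'n \<Rightarrow> 'k" where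
  "D1_mat_rule A g y = (\<lambda>i. \<Sum>j\<in>UNIV. Sum_any (\<lambda>t. D1_mat_coeff A g i j t * y t j))"

definition D1_mat_ca ::
  "('n::finite, 'g::group_add, 'k::field) D1_mat \<Rightarrow> ('g \<Rightarrow> 'n \<Rightarrow> 'k) \<Rightarrow> 'g \<Rightarrow> 'n \<Rightarrow> 'k" where
  "D1_mat_ca A = sigma (D1_mat_rule A)"

definition D1_mat_supported :: "('n, 'g, 'k::field) D1_mat \<Rightarrow> 'g set \<Rightarrow> 'g set \<Rightarrow> bool" where
  "D1_mat_supported A S F \<longleftrightarrow> finite S \<and> finite F \<and> (\<forall>i j t. fst (A i j) t \<noteq> 0 \<longrightarrow> t \<in> S)
     \<and> (\<forall>i j g t. snd (A i j) g t \<noteq> 0 \<longrightarrow> t \<in> S \<and> g \<in> F)"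

lemma D1_mat_supported_if_carrier:
  fixes A :: "('n::finite, 'g, 'k::field) D1_mat"
  assumes car: "\<And>i j. A i j \<in> D1_carrier"
  shows "\<exists>S F. D1_mat_supported A S F"
proof -
  define F where "F = (\<Union>i j. {g. snd (A i j) g \<noteq> (\<lambda>_. 0)})"
  define S where "S = (\<Union>i j. {t. fst (A i j) t \<noteq> 0} \<union> (\<Union>g\<in>F. {t. snd (A i j) g t \<noteq> 0}))"
  have fin: "finite {t. fst (A i j) t \<noteq> 0}" "finite {g. snd (A i j) g \<noteq> (\<lambda>_. 0)}"
    "finite {t. snd (A i j) g t \<noteq> 0}" for i j g
    using car[of i j] by (auto simp: D1_carrier_def fin_supp_def mem_Times_iff)
  have "finite F"
    unfolding F_def using fin(2) by simp
  moreover have "finite S"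
    unfolding S_def using fin(1,3) \<open>finite F\<close> by simp
  moreover have "g \<in> F" if "snd (A i j) g t \<noteq> 0" for i j g t
    using that unfolding F_def by (auto simp: fun_eq_iff)
  moreover have "t \<in> S" if "fst (A i j) t \<noteq> 0" for i j t
    using that unfolding S_def by blast
  moreover have "t \<in> S" if "snd (A i j) g t \<noteq> 0" "g \<in> F" for i j g t
    using that unfolding S_def by blast
  ultimately have "D1_mat_supported A S F"
    unfolding D1_mat_supported_def by blast
  then show ?thesis by blast
qed

lemma D1_carrier_if_supported:
  assumes "D1_mat_supported A S F"
  shows "A i j \<in> D1_carrier"
proof -
  have S: "finite S" "finite F" "\<And>i j t. fst (A i j) t \<noteq> 0 \<Longrightarrow> t \<in> S"
    "\<And>i j g t. snd (A i j) g t \<noteq> 0 \<Longrightarrow> t \<in> S \<and> g \<in> F"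
    using assms unfolding D1_mat_supported_def by blast+
  have "{t. fst (A i j) t \<noteq> 0} \<subseteq> S" "{t. snd (A i j) g t \<noteq> 0} \<subseteq> S" for g
    using S(3,4) by blast+
  moreover have "{g. snd (A i j) g \<noteq> (\<lambda>_. 0)} \<subseteq> F"
    using S(4) by (auto simp: fun_eq_iff)
  ultimately have "fin_supp (fst (A i j))" "finite {g. snd (A i j) g \<noteq> (\<lambda>_. 0)}"
    "fin_supp (snd (A i j) g)" for g
    unfolding fin_supp_def using S(1,2) by (blast intro: finite_subset)+
  then show ?thesis
    by (simp add: D1_carrier_def mem_Times_iff)
qed

lemma D1_mat_supported_coeff:
  "D1_mat_supported A S F \<Longrightarrow> D1_mat_coeff A g i j t \<noteq> 0 \<Longrightarrow> t \<in> S"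
  unfolding D1_mat_supported_def D1_mat_coeff_def by (metis add.right_neutral add_0)

lemma D1_mat_supported_snd:
  "D1_mat_supported A S F \<Longrightarrow> g \<notin> F \<Longrightarrow> snd (A i j) g t = 0"
  unfolding D1_mat_supported_def by blast

lemma D1_mat_rule_eq_sum:
  assumes "finite S" "\<And>g i j t. D1_mat_coeff A g i j t \<noteq> 0 \<Longrightarrow> t \<in> S"
  shows "D1_mat_rule A g y i = (\<Sum>j\<in>UNIV. \<Sum>t\<in>S. D1_mat_coeff A g i j t * y t j)"
  unfolding D1_mat_rule_def
  by (rule sum.cong[OF refl], rule Sum_any.expand_superset) (use assms in auto)

lemma D1_mat_rule_eq_sum_supported:
  assumes "D1_mat_supported A S F"
  shows "D1_mat_rule A g y i = (\<Sum>j\<in>UNIV. \<Sum>t\<in>S. D1_mat_coeff A g i j t * y t j)"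
  using assms D1_mat_supported_coeff[OF assms]
  by (intro D1_mat_rule_eq_sum) (auto simp: D1_mat_supported_def)

lemma D1_mat_ca_unit: "D1_mat_ca C (unit_cfg (g + t) j) g i = D1_mat_coeff C g i j t"
proof -
  have "D1_mat_ca C (unit_cfg (g + t) j) g i
      = (\<Sum>j'\<in>UNIV. Sum_any (\<lambda>t'. if t' = t then (if j' = j then D1_mat_coeff C g i j' t' else 0) else 0))"
    unfolding D1_mat_ca_def sigma_def D1_mat_rule_def
    by (rule sum.cong[OF refl], rule Sum_any.cong) (auto simp: unit_cfg_def)
  then show ?thesis by simp
qed

lemma D1_mat_ca_one: "D1_mat_ca (D1_mat_one :: ('n::finite, 'g::group_add, 'k::field) D1_mat) = id"
proof (intro ext)
  fix x :: "'g \<Rightarrow> 'n \<Rightarrow> 'k" and g i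
  have "D1_mat_coeff (D1_mat_one :: ('n, 'g, 'k) D1_mat) g i j t * x (g + t) j
      = (if t = 0 then (if j = i then x g j else 0) else 0)" for j t
    by (auto simp: D1_mat_coeff_def D1_mat_one_def D1_one_def D1_zero_def)
  then show "D1_mat_ca D1_mat_one x g i = id x g i"
    by (simp add: D1_mat_ca_def sigma_def D1_mat_rule_def)
qed

lemma D1_mat_rule_lin_S:
  assumes A: "D1_mat_supported (A :: ('n::finite, 'g::group_add, 'k::field) D1_mat) S F"
  shows "D1_mat_rule A g \<in> lin_S S"
  unfolding lin_S_def cfg_linear_def local_on_def
proof (intro CollectI conjI allI impI)
  fix y z :: "'g \<Rightarrow> 'n \<Rightarrow> 'k" and c :: 'k
  show "D1_mat_rule A g (\<lambda>h i. y h i + z h i) = (\<lambda>i. D1_mat_rule A g y i + D1_mat_rule A g z i)"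
    by (simp add: D1_mat_rule_eq_sum_supported[OF A] fun_eq_iff distrib_left sum.distrib)
  have "D1_mat_rule A g (\<lambda>h i. c * y h i) i = c * D1_mat_rule A g y i" for i
    by (simp add: D1_mat_rule_eq_sum_supported[OF A] sum_distrib_left mult.commute[of _ c])
  then show "D1_mat_rule A g (\<lambda>h i. c * y h i) = (\<lambda>i. c * D1_mat_rule A g y i)"
    by (simp add: fun_eq_iff)
next
  fix y z :: "'g \<Rightarrow> 'n \<Rightarrow> 'k"
  assume "\<forall>m\<in>S. y m = z m"
  then show "D1_mat_rule A g y = D1_mat_rule A g z"
    by (simp add: D1_mat_rule_eq_sum_supported[OF A] fun_eq_iff)
qed

lemma D1_mat_ca_in_LNUCA_c:
  assumes A: "D1_mat_supported (A :: ('n::finite, 'g::group_add, 'k::field) D1_mat) S F"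
  shows "D1_mat_ca A \<in> LNUCA_c"
proof -
  have "finite S" "finite F"
    using A by (simp_all add: D1_mat_supported_def)
  moreover have "D1_mat_rule A g = (\<lambda>y i. \<Sum>j\<in>UNIV. Sum_any (\<lambda>t. fst (A i j) t * y t j))"
    if "g \<notin> F" for g
    using that D1_mat_supported_snd[OF A] by (simp add: fun_eq_iff D1_mat_rule_def D1_mat_coeff_def)
  ultimately have "lnuca_rule (D1_mat_rule A)"
    unfolding lnuca_rule_def using D1_mat_rule_lin_S[OF A] by blast
  then show ?thesis
    unfolding LNUCA_c_def D1_mat_ca_def by blast
qed

lemma D1_mat_coeff_mult:
  assumes A: "D1_mat_supported (A :: ('n::finite, 'g::group_add, 'k::field) D1_mat) S F"
  shows "D1_mat_coeff (D1_mat_mult A B) g i j h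
    = (\<Sum>l\<in>UNIV. \<Sum>t\<in>S. D1_mat_coeff A g i l t * D1_mat_coeff B (g + t) l j (- t + h))"
proof -
  have expand: "Sum_any (\<lambda>t. a t * b t) = (\<Sum>t\<in>S. a t * b t)"
    if "\<And>t. t \<notin> S \<Longrightarrow> a t = 0" for a b :: "'g \<Rightarrow> 'k"
    using A that by (intro Sum_any.expand_superset) (auto simp: D1_mat_supported_def)
  have "fst (D1_mult (A i l) (B l j)) h + snd (D1_mult (A i l) (B l j)) g h
      = (\<Sum>t\<in>S. D1_mat_coeff A g i l t * D1_mat_coeff B (g + t) l j (- t + h))" for l
  proof -
    have "fst (A i l) t = 0" "snd (A i l) g t = 0" if "t \<notin> S" for t
      using A that unfolding D1_mat_supported_def by blast+
    then show ?thesis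
      by (simp add: D1_mult_def gr_mult_def case_prod_beta expand D1_mat_coeff_def
          algebra_simps sum.distrib)
  qed
  then show ?thesis
    by (simp add: D1_mat_coeff_def D1_mat_mult_def sum.distrib[symmetric])
qed

lemma sum_swap_pairs:
  "(\<Sum>l\<in>L. \<Sum>t\<in>T. \<Sum>j\<in>J. \<Sum>h\<in>H. f l t j h) = (\<Sum>j\<in>J. \<Sum>h\<in>H. \<Sum>l\<in>L. \<Sum>t\<in>T. f l t j h)"
  by (simp only: sum.swap[of _ T J] sum.swap[of _ L J] sum.swap[of _ T H] sum.swap[of _ L H])

lemma sum_translate:
  fixes t :: "'g::group_add" and f :: "'g \<Rightarrow> 'a::semiring_0"
  assumes "finite H" "(+) t ` S \<subseteq> H" "\<And>u. u \<notin> S \<Longrightarrow> f u = 0"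
  shows "(\<Sum>h\<in>H. f (- t + h) * y h) = (\<Sum>u\<in>S. f u * y (t + u))"
proof -
  have "(\<Sum>u\<in>S. f u * y (t + u)) = (\<Sum>h\<in>(+) t ` S. f (- t + h) * y h)"
    by (simp add: sum.reindex inj_on_def add.assoc[symmetric])
  also have "\<dots> = (\<Sum>h\<in>H. f (- t + h) * y h)"
  proof (rule sum.mono_neutral_left[OF assms(1,2)], intro ballI)
    fix h assume "h \<in> H - (+) t ` S"
    moreover have "h = t + (- t + h)" by (simp add: add.assoc[symmetric])
    ultimately have "- t + h \<notin> S" by blast
    then show "f (- t + h) * y h = 0" by (simp add: assms(3))
  qed
  finally show ?thesis ..
qed

lemma D1_mat_coeff_mult_support:
  assumes A: "D1_mat_supported A SA FA" and B: "D1_mat_supported B SB FB"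
    and nz: "D1_mat_coeff (D1_mat_mult A B) g i j h \<noteq> 0"
  shows "h \<in> (\<lambda>(t, u). t + u) ` (SA \<times> SB)"
proof -
  obtain l where "(\<Sum>t\<in>SA. D1_mat_coeff A g i l t * D1_mat_coeff B (g + t) l j (- t + h)) \<noteq> 0"
    using nz unfolding D1_mat_coeff_mult[OF A] by (rule sum.not_neutral_contains_not_neutral)
  then obtain t where "t \<in> SA" "D1_mat_coeff A g i l t * D1_mat_coeff B (g + t) l j (- t + h) \<noteq> 0"
    by (rule sum.not_neutral_contains_not_neutral)
  then have "t \<in> SA" "- t + h \<in> SB"
    using D1_mat_supported_coeff[OF B] by auto
  moreover have "h = t + (- t + h)"
    by (simp add: add.assoc[symmetric])
  ultimately show ?thesis
    by force
qed

lemma D1_mat_ca_mult: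
  fixes A B :: "('n::finite, 'g::group_add, 'k::field) D1_mat"
  assumes A: "D1_mat_supported A SA FA" and B: "D1_mat_supported B SB FB"
  shows "D1_mat_ca (D1_mat_mult A B) = D1_mat_ca A \<circ> D1_mat_ca B"
proof (intro ext)
  fix x :: "'g \<Rightarrow> 'n \<Rightarrow> 'k" and g i
  define H where "H = (\<lambda>(t, u). t + u) ` (SA \<times> SB)"
  have finH: "finite H"
    using A B by (simp add: H_def D1_mat_supported_def)
  have B_outside: "D1_mat_coeff B g' l j u = 0" if "u \<notin> SB" for g' l j u
    using D1_mat_supported_coeff[OF B] that by blast
  have "D1_mat_coeff (D1_mat_mult A B) g' i' j h \<noteq> 0 \<Longrightarrow> h \<in> H" for g' i' j h
    unfolding H_def by (rule D1_mat_coeff_mult_support[OF A B])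
  then have "D1_mat_ca (D1_mat_mult A B) x g i
      = (\<Sum>j\<in>UNIV. \<Sum>h\<in>H. D1_mat_coeff (D1_mat_mult A B) g i j h * x (g + h) j)"
    unfolding D1_mat_ca_def sigma_def by (rule D1_mat_rule_eq_sum[OF finH])
  also have "\<dots> = (\<Sum>j\<in>UNIV. \<Sum>h\<in>H. \<Sum>l\<in>UNIV. \<Sum>t\<in>SA.
      D1_mat_coeff A g i l t * (D1_mat_coeff B (g + t) l j (- t + h) * x (g + h) j))"
    by (simp only: D1_mat_coeff_mult[OF A] sum_distrib_right mult.assoc)
  also have "\<dots> = (\<Sum>l\<in>UNIV. \<Sum>t\<in>SA. D1_mat_coeff A g i l t *
      (\<Sum>j\<in>UNIV. \<Sum>h\<in>H. D1_mat_coeff B (g + t) l j (- t + h) * x (g + h) j))"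
    unfolding sum_distrib_left by (rule sum_swap_pairs)
  also have "\<dots> = (\<Sum>l\<in>UNIV. \<Sum>t\<in>SA. D1_mat_coeff A g i l t *
      (\<Sum>j\<in>UNIV. \<Sum>u\<in>SB. D1_mat_coeff B (g + t) l j u * x (g + t + u) j))"
  proof (rule sum.cong[OF refl], rule sum.cong[OF refl], rule arg_cong[where f = "(*) _"],
      rule sum.cong[OF refl])
    fix t l j assume "t \<in> SA"
    then have "(+) t ` SB \<subseteq> H" by (auto simp: H_def)
    then show "(\<Sum>h\<in>H. D1_mat_coeff B (g + t) l j (- t + h) * x (g + h) j)
        = (\<Sum>u\<in>SB. D1_mat_coeff B (g + t) l j u * x (g + t + u) j)"
      using sum_translate[OF finH, of t SB "D1_mat_coeff B (g + t) l j" "\<lambda>h. x (g + h) j"] B_outside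
      by (simp add: add.assoc)
  qed
  also have "\<dots> = D1_mat_ca A (D1_mat_ca B x) g i"
    by (simp add: D1_mat_ca_def sigma_def D1_mat_rule_eq_sum_supported[OF A]
        D1_mat_rule_eq_sum_supported[OF B] add.assoc)
  finally show "D1_mat_ca (D1_mat_mult A B) x g i = (D1_mat_ca A \<circ> D1_mat_ca B) x g i"
    by simp
qed

lemma D1_mat_mult_snd_vanishes:
  assumes A: "D1_mat_supported A SA FA" and B: "D1_mat_supported B SB FB"
    and g: "g \<notin> FA" "\<And>t. t \<in> SA \<Longrightarrow> g + t \<notin> FB"
  shows "snd (D1_mat_mult A B i j) g = (\<lambda>_. 0)"
proof -
  have fst_snd: "fst (A i l) t * snd (B l j) (g + t) h = 0" for l t h
  proof (cases "fst (A i l) t = 0")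
    case False
    then have "t \<in> SA"
      using A unfolding D1_mat_supported_def by blast
    then show ?thesis
      using D1_mat_supported_snd[OF B g(2)] by simp
  qed simp
  have snd_A: "snd (A i l) g t = 0" for l t
    using D1_mat_supported_snd[OF A g(1)] .
  show ?thesis
    by (simp add: D1_mat_mult_def D1_mult_def case_prod_beta fun_eq_iff fst_snd snd_A)
qed

lemma D1_mat_eqI:
  assumes "D1_mat_ca A = D1_mat_ca (B :: ('n::finite, 'g::group_add, 'k::field) D1_mat)"
    and "\<And>i j. snd (A i j) g0 = (\<lambda>_. 0)" "\<And>i j. snd (B i j) g0 = (\<lambda>_. 0)"
  shows "A = B"
proof -
  have coeff: "D1_mat_coeff A g i j t = D1_mat_coeff B g i j t" for g i j t
    using D1_mat_ca_unit[of A g t j i] D1_mat_ca_unit[of B g t j i] assms(1) by simp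
  have fst_eq: "fst (A i j) = fst (B i j)" for i j
    using coeff[of g0 i j] assms(2,3) by (simp add: D1_mat_coeff_def fun_eq_iff)
  have "snd (A i j) = snd (B i j)" for i j
    using coeff[of _ i j] fst_eq[of i j] by (simp add: D1_mat_coeff_def fun_eq_iff)
  then show ?thesis
    using fst_eq by (simp add: fun_eq_iff prod_eq_iff)
qed

lemma D1_mat_mult_eq_one_if_ca_id:
  assumes inf: "infinite (UNIV :: 'g::group_add set)"
    and A: "D1_mat_supported (A :: ('n::finite, 'g, 'k::field) D1_mat) SA FA"
    and B: "D1_mat_supported B SB FB"
    and AB: "D1_mat_ca (D1_mat_mult A B) = id"
  shows "D1_mat_mult A B = D1_mat_one"
proof -
  have "finite (FA \<union> {g. \<exists>t\<in>SA. g + t \<in> FB})"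
    using A B finite_translates_meeting[of SA FB] by (simp add: D1_mat_supported_def)
  then obtain g0 where "g0 \<notin> FA \<union> {g. \<exists>t\<in>SA. g + t \<in> FB}"
    using ex_new_if_finite[OF inf] by blast
  then have "snd (D1_mat_mult A B i j) g0 = (\<lambda>_. 0)" for i j
    by (intro D1_mat_mult_snd_vanishes[OF A B]) auto
  moreover have "snd (D1_mat_one i j) g0 = (\<lambda>_. 0)" for i j :: 'n
    by (simp add: D1_mat_one_def D1_one_def D1_zero_def)
  moreover have "D1_mat_ca (D1_mat_mult A B) = D1_mat_ca D1_mat_one"
    by (simp add: AB D1_mat_ca_one)
  ultimately show ?thesis
    by (intro D1_mat_eqI)
qed

definition D1_mat_of_rule ::
  "('g \<Rightarrow> ('g \<Rightarrow> 'n \<Rightarrow> 'k::field) \<Rightarrow> 'n \<Rightarrow> 'k) \<Rightarrow> (('g \<Rightarrow> 'n \<Rightarrow> 'k) \<Rightarrow> 'n \<Rightarrow> 'k) \<Rightarrow> ('n, 'g, 'k) D1_mat" where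
  "D1_mat_of_rule s c i j = ((\<lambda>t. functional_coeffs (\<lambda>y. c y i) t j),
     (\<lambda>g t. functional_coeffs (\<lambda>y. s g y i) t j - functional_coeffs (\<lambda>y. c y i) t j))"

lemma lin_S_coeffs_outside:
  "\<phi> \<in> lin_S M \<Longrightarrow> t \<notin> M \<Longrightarrow> functional_coeffs (\<lambda>y. \<phi> y i) t j = 0"
  by (rule functional_coeffs_outside[OF lin_S_linear_functional lin_S_local_coordinate])

lemma D1_mat_of_rule_supported:
  fixes s :: "'g \<Rightarrow> ('g \<Rightarrow> 'n::finite \<Rightarrow> 'k::field) \<Rightarrow> 'n \<Rightarrow> 'k"
  assumes M: "finite M" "\<And>g. s g \<in> lin_S M" and F: "finite F" "\<And>g. g \<notin> F \<Longrightarrow> s g = c"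
    and c: "c \<in> lin_S M"
  shows "D1_mat_supported (D1_mat_of_rule s c) M F"
  unfolding D1_mat_supported_def
proof (intro conjI allI impI M(1) F(1))
  fix i j t
  assume "fst (D1_mat_of_rule s c i j) t \<noteq> 0"
  then show "t \<in> M"
    by (rule contrapos_np) (simp add: D1_mat_of_rule_def lin_S_coeffs_outside[OF c])
next
  fix i j g t
  assume nz: "snd (D1_mat_of_rule s c i j) g t \<noteq> 0"
  then show "t \<in> M"
    by (rule contrapos_np) (simp add: D1_mat_of_rule_def lin_S_coeffs_outside[OF c]
        lin_S_coeffs_outside[OF M(2)])
  show "g \<in> F"
    using nz by (rule contrapos_np) (simp add: D1_mat_of_rule_def F(2))
qed

lemma D1_mat_ca_of_rule:
  fixes s :: "'g::group_add \<Rightarrow> ('g \<Rightarrow> 'n::finite \<Rightarrow> 'k::field) \<Rightarrow> 'n \<Rightarrow> 'k"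
  assumes M: "finite M" "\<And>g. s g \<in> lin_S M"
  shows "D1_mat_ca (D1_mat_of_rule s c) = sigma s"
proof (intro ext)
  fix x g i
  have coeff: "D1_mat_coeff (D1_mat_of_rule s c) g i j t = functional_coeffs (\<lambda>y. s g y i) t j" for g i j t
    by (simp add: D1_mat_coeff_def D1_mat_of_rule_def)
  have "D1_mat_ca (D1_mat_of_rule s c) x g i
      = (\<Sum>j\<in>UNIV. \<Sum>t\<in>M. functional_coeffs (\<lambda>y. s g y i) t j * x (g + t) j)"
    unfolding D1_mat_ca_def sigma_def coeff[symmetric]
    by (rule D1_mat_rule_eq_sum[OF M(1)]) (use lin_S_coeffs_outside[OF M(2)] coeff in metis)
  also have "\<dots> = cfg_pairing M (\<lambda>t. x (g + t)) (functional_coeffs (\<lambda>y. s g y i))"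
    unfolding cfg_pairing_def sum.cartesian_product[symmetric]
    by (subst sum.swap) (simp add: mult.commute)
  also have "\<dots> = sigma s x g i"
    unfolding sigma_def
    by (rule local_functional_eq_pairing[OF lin_S_linear_functional[OF M(2)] lin_S_local_coordinate[OF M(2)]
        order_refl M(1), symmetric])
  finally show "D1_mat_ca (D1_mat_of_rule s c) x g i = sigma s x g i" .
qed

lemma D1_mat_ca_surj:
  assumes inf: "infinite (UNIV :: 'g::group_add set)"
    and f: "f \<in> (LNUCA_c :: (('g \<Rightarrow> 'n::finite \<Rightarrow> 'k::field) \<Rightarrow> _) set)"
  obtains A S F where "D1_mat_supported A S F" "D1_mat_ca A = f"
proof -
  obtain s where s: "lnuca_rule s" "f = sigma s"
    using f unfolding LNUCA_c_def by blast
  obtain M F c where M: "finite M" "\<And>g. s g \<in> lin_S M"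
    and F: "finite F" "\<And>g. g \<notin> F \<Longrightarrow> s g = c" and c: "c \<in> lin_S M"
    using lnuca_ruleE[OF inf s(1)] by blast
  have "D1_mat_supported (D1_mat_of_rule s c) M F"
    using M F c by (rule D1_mat_of_rule_supported)
  moreover have "D1_mat_ca (D1_mat_of_rule s c) = f"
    using M s(2) by (simp add: D1_mat_ca_of_rule)
  ultimately show ?thesis
    by (rule that)
qed

lemma directly_finite_transfer:
  assumes mult: "\<And>a b. a \<in> P \<Longrightarrow> b \<in> P \<Longrightarrow> \<Psi> (mult a b) = \<Psi> a \<circ> \<Psi> b"
    and one: "\<Psi> one = id" and onto: "\<Psi> ` P = Q"
    and faithful: "\<And>a b. a \<in> P \<Longrightarrow> b \<in> P \<Longrightarrow> \<Psi> (mult a b) = id \<Longrightarrow> mult a b = one"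
  shows "(\<forall>a\<in>P. \<forall>b\<in>P. mult a b = one \<longrightarrow> mult b a = one)
    \<longleftrightarrow> (\<forall>f\<in>Q. \<forall>g\<in>Q. f \<circ> g = id \<longrightarrow> g \<circ> f = id)"
proof
  assume df: "\<forall>a\<in>P. \<forall>b\<in>P. mult a b = one \<longrightarrow> mult b a = one"
  show "\<forall>f\<in>Q. \<forall>g\<in>Q. f \<circ> g = id \<longrightarrow> g \<circ> f = id"
  proof (intro ballI impI)
    fix f g assume "f \<in> Q" "g \<in> Q" and fg: "f \<circ> g = id"
    then obtain a b where ab: "a \<in> P" "b \<in> P" and "f = \<Psi> a" "g = \<Psi> b"
      using onto by blast
    then have "\<Psi> (mult a b) = id"
      using fg mult by simp
    then have "mult b a = one"
      using df faithful ab by blast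
    then show "g \<circ> f = id"
      using mult[OF ab(2,1)] one \<open>f = \<Psi> a\<close> \<open>g = \<Psi> b\<close> by simp
  qed
next
  assume df: "\<forall>f\<in>Q. \<forall>g\<in>Q. f \<circ> g = id \<longrightarrow> g \<circ> f = id"
  show "\<forall>a\<in>P. \<forall>b\<in>P. mult a b = one \<longrightarrow> mult b a = one"
  proof (intro ballI impI)
    fix a b assume ab: "a \<in> P" "b \<in> P" and "mult a b = one"
    then have "\<Psi> a \<circ> \<Psi> b = id"
      using mult one by metis
    moreover have "\<Psi> a \<in> Q" "\<Psi> b \<in> Q"
      using onto ab by blast+
    ultimately have "\<Psi> (mult b a) = id"
      using df mult[OF ab(2,1)] by simp
    then show "mult b a = one"
      using faithful ab by blast
  qed
qed

lemma D1_mat_directly_finite_iff: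
  assumes inf: "infinite (UNIV :: 'g::group_add set)"
  shows "D1_mat_directly_finite TYPE('g) TYPE('n::finite) TYPE('k::field)
    \<longleftrightarrow> LNUCA_directly_finite TYPE('g) TYPE('n) TYPE('k)"
proof -
  let ?P = "{A :: ('n, 'g, 'k) D1_mat. \<forall>i j. A i j \<in> D1_carrier}"
  have supported: "\<exists>S F. D1_mat_supported A S F" if "A \<in> ?P" for A
    using that by (intro D1_mat_supported_if_carrier) simp
  have "(\<forall>A\<in>?P. \<forall>B\<in>?P. D1_mat_mult A B = D1_mat_one \<longrightarrow> D1_mat_mult B A = D1_mat_one)
    \<longleftrightarrow> (\<forall>f\<in>(LNUCA_c :: (('g \<Rightarrow> 'n \<Rightarrow> 'k) \<Rightarrow> _) set). \<forall>g\<in>LNUCA_c. f \<circ> g = id \<longrightarrow> g \<circ> f = id)"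
  proof (rule directly_finite_transfer[where \<Psi> = D1_mat_ca])
    show "D1_mat_ca (D1_mat_mult A B) = D1_mat_ca A \<circ> D1_mat_ca B" if "A \<in> ?P" "B \<in> ?P" for A B
      using supported[OF that(1)] supported[OF that(2)] D1_mat_ca_mult by blast
    show "D1_mat_mult A B = D1_mat_one"
      if "A \<in> ?P" "B \<in> ?P" "D1_mat_ca (D1_mat_mult A B) = id" for A B
      using supported[OF that(1)] supported[OF that(2)] D1_mat_mult_eq_one_if_ca_id[OF inf _ _ that(3)]
      by blast
    show "D1_mat_ca ` ?P = LNUCA_c"
    proof
      show "D1_mat_ca ` ?P \<subseteq> LNUCA_c"
        using supported D1_mat_ca_in_LNUCA_c by blast
      show "LNUCA_c \<subseteq> D1_mat_ca ` ?P"
      proof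
        fix f assume "f \<in> (LNUCA_c :: (('g \<Rightarrow> 'n \<Rightarrow> 'k) \<Rightarrow> _) set)"
        then obtain A S F where A: "D1_mat_supported A S F" and "D1_mat_ca A = f"
          using D1_mat_ca_surj[OF inf] by blast
        moreover have "A \<in> ?P"
          using D1_carrier_if_supported[OF A] by simp
        ultimately show "f \<in> D1_mat_ca ` ?P"
          by blast
      qed
    qed
  qed (rule D1_mat_ca_one)
  then show ?thesis
    unfolding D1_mat_directly_finite_def LNUCA_directly_finite_def by simp
qed

theorem theorem7p2:
  assumes "infinite (UNIV :: 'g::group_add set)"
  shows "((\<forall>\<tau> \<in> (LNUCA_c :: (('g \<Rightarrow> 'n::finite \<Rightarrow> 'k::field) \<Rightarrow> _) set).
              stably_injective \<tau> \<longrightarrow> surj \<tau>)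
           \<longleftrightarrow> LNUCA_directly_finite TYPE('g) TYPE('n) TYPE('k))
       \<and> (LNUCA_directly_finite TYPE('g) TYPE('n) TYPE('k)
           \<longleftrightarrow> D1_mat_directly_finite TYPE('g) TYPE('n) TYPE('k))"
proof
  show "(\<forall>\<tau> \<in> (LNUCA_c :: (('g \<Rightarrow> 'n \<Rightarrow> 'k) \<Rightarrow> _) set). stably_injective \<tau> \<longrightarrow> surj \<tau>)
      \<longleftrightarrow> LNUCA_directly_finite TYPE('g) TYPE('n) TYPE('k)"
    using LNUCA_directly_finite_if_stably_injective_surj surj_if_stably_injective[OF assms] by blast
  show "LNUCA_directly_finite TYPE('g) TYPE('n) TYPE('k)
      \<longleftrightarrow> D1_mat_directly_finite TYPE('g) TYPE('n) TYPE('k)"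
    by (rule D1_mat_directly_finite_iff[OF assms, symmetric])
qed

end
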